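(* Let $n$ be a positive integer. Let $U_n\subseteq T_n$ be the set of triples $(A,B,C)\in T_n$ such that $C$ has at least one point strictly above the horizontal axis and either $B$ ends with a down step or $B$ is empty. Let $D_n^+\subseteq D_n$ be the set of pairs $(H,X)\in D_n$ in which $X$ is strictly above the horizontal axis. Define $s:U_n\to D_n^+$ as follows: for $(A,B,C)\in U_n$, let $K$ be the leftmost point of $C$ of maximal height, let $K$ cut $C$ into a left part $C_1$ and a right part $C_2$, and set $s(A,B,C)=(H,X)$, where $H$ is the concatenation of $C_1$, $A$, $B$, $C_2$ (in this order) and $X$ is the point of $H$ where $A$ ends and $B$ begins. Then $s$ is a bijection from $U_n$ onto $D_n^+$.
   Context: A lattice path here is a finite (possibly empty) sequence of steps, each an up step $(1,1)$ or a down step $(1,-1)$, drawn as a polygonal line from a given starting lattice point; its lattice points are its starting point and the endpoints of its steps; the height of a point is its vertical coordinate. $T_n$ is the set of ordered triples $(A,B,C)$ of lattice paths such that for some nonnegative integers $i,j,k$ with $i+j+k=n$, $A$ has $i$ up and $i$ down steps, $B$ has $j$ up and $j$ down steps, and $C$ has $k$ up and $k$ down steps; each of $A,B,C$ is regarded as drawn starting (and hence ending) on the horizontal axis, and statements about heights of points of $C$ or of $C$ being above/below the axis refer to this drawing. $D_n$ is the set of pairs $(H,X)$ where $H$ is a lattice path with $n$ up steps and $n$ down steps drawn from $(0,0)$ to $(2n,0)$ and $X$ is one of the $2n+1$ lattice points of $H$. Concatenation of paths means drawing them successively, each starting at the endpoint of the preceding one, the first starting at $(0,0)$. *)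

theory Defs
  imports Main
begin

text \<open>A lattice path is a list of steps: True = up step (1,1), False = down step (1,-1).
  Drawn from the origin, its lattice points are (k, height p k) for k \<le> length p.\<close>

type_synonym path = "bool list"

definition step_val :: "bool \<Rightarrow> int" where
  "step_val b = (if b then 1 else -1)"

definition height :: "path \<Rightarrow> nat \<Rightarrow> int" where
  "height p k = sum_list (map step_val (take k p))"

definition ups :: "path \<Rightarrow> nat" where
  "ups p = length (filter (\<lambda>b. b) p)"

definition downs :: "path \<Rightarrow> nat" where
  "downs p = length (filter (\<lambda>b. \<not> b) p)"

definition points :: "path \<Rightarrow> (int \<times> int) set" where
  "points p = {(int k, height p k) | k. k \<le> length p}"

definition T :: "nat \<Rightarrow> (path \<times> path \<times> path) set" where
  "T n = {(A, B, C). \<exists>i j k. i + j + k = n \<and>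
            ups A = i \<and> downs A = i \<and> ups B = j \<and> downs B = j \<and> ups C = k \<and> downs C = k}"

definition D :: "nat \<Rightarrow> (path \<times> (int \<times> int)) set" where
  "D n = {(H, X). ups H = n \<and> downs H = n \<and> X \<in> points H}"

definition U :: "nat \<Rightarrow> (path \<times> path \<times> path) set" where
  "U n = {(A, B, C) \<in> T n. (\<exists>P \<in> points C. snd P > 0) \<and> (B = [] \<or> last B = False)}"

definition Dplus :: "nat \<Rightarrow> (path \<times> (int \<times> int)) set" where
  "Dplus n = {(H, X) \<in> D n. snd X > 0}"

definition kpos :: "path \<Rightarrow> nat" where
  "kpos C = (LEAST k. k \<le> length C \<and> height C k = Max {height C j | j. j \<le> length C})"

definition s :: "path \<times> path \<times> path \<Rightarrow> path \<times> (int \<times> int)" where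
  "s = (\<lambda>(A, B, C).
     (let m = kpos C; C1 = take m C; C2 = drop m C; H = C1 @ A @ B @ C2;
          x = length C1 + length A
      in (H, (int x, height H x))))"

end

theory Submission
  imports Defs
begin

text \<open>Write \<open>h\<close> for the maximal height of \<open>C\<close>. In \<open>H = C\<^sub>1 A B C\<^sub>2\<close> the marked point
  \<open>X\<close> lies at height \<open>h > 0\<close>, the prefix \<open>C\<^sub>1\<close> stays strictly below \<open>h\<close> before reaching it,
  and the suffix \<open>C\<^sub>2\<close> never rises above \<open>h\<close>. Hence the cut between \<open>C\<^sub>1\<close> and \<open>A\<close> is
  the first time \<open>H\<close> reaches level \<open>h\<close>, and, because \<open>B\<close> is empty or ends with a down step,
  the cut between \<open>B\<close> and \<open>C\<^sub>2\<close> is the end of the last excursion of \<open>H\<close> above \<open>h\<close> after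
  \<open>X\<close>. Cutting an arbitrary \<open>(H, X)\<close> with \<open>X\<close> above the axis at these two points
  recovers a triple in \<open>U n\<close>, which gives an explicit inverse of \<open>s\<close>; the steps of
  \<open>\<plusminus>1\<close> guarantee that both cuts lie exactly at height \<open>h\<close>.\<close>

lemma height_0 [simp]: "height p 0 = 0"
  by (simp add: height_def)

lemma height_Suc: "k < length p \<Longrightarrow> height p (Suc k) = height p k + step_val (p ! k)"
  by (simp add: height_def take_Suc_conv_app_nth)

lemma height_length: "height p (length p) = int (ups p) - int (downs p)"
  unfolding height_def ups_def downs_def by (induct p) (auto simp: step_val_def)

lemma height_take: "height (take a p) j = height p (min j a)"
  by (simp add: height_def min_def)

lemma height_add: "height p (a + j) = height p a + height (drop a p) j"
  by (simp add: height_def take_add)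

lemma height_append_left: "k \<le> length u \<Longrightarrow> height (u @ v) k = height u k"
  by (simp add: height_def)

lemma height_append_right: "height (u @ v) (length u + j) = height u (length u) + height v j"
  by (simp add: height_def take_add)

lemma ups_append [simp]: "ups (u @ v) = ups u + ups v"
  by (simp add: ups_def)

lemma downs_append [simp]: "downs (u @ v) = downs u + downs v"
  by (simp add: downs_def)

lemma height_segment:
  assumes "a \<le> b" "b \<le> length p"
  shows "height (drop a (take b p)) (length (drop a (take b p))) = height p b - height p a"
  using height_add[of "take b p" a "b - a"] assms by (simp add: height_take)

lemma height_last_down:
  assumes "p \<noteq> []" "\<not> last p"
  shows "height p (length p - 1) = height p (length p) + 1"
  using height_Suc[of "length p - 1" p] assms by (simp add: last_conv_nth step_val_def)

lemma T_iff:
  "(A, B, C) \<in> T n \<longleftrightarrow> ups A = downs A \<and> ups B = downs B \<and> ups C = downs C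
     \<and> ups A + ups B + ups C = n"
  by (auto simp: T_def)

lemma balanced_iff: "ups p = downs p \<longleftrightarrow> height p (length p) = 0"
  by (simp add: height_length)

definition leftmost_max :: "path \<Rightarrow> nat \<Rightarrow> bool" where
  "leftmost_max C m \<longleftrightarrow> m \<le> length C \<and> (\<forall>j<m. height C j < height C m)
     \<and> (\<forall>j\<le>length C. height C j \<le> height C m)"

lemma leftmost_max_kpos: "leftmost_max C (kpos C)"
proof -
  define M where "M = Max {height C j | j. j \<le> length C}"
  have hs: "{height C j | j. j \<le> length C} = height C ` {..length C}" by auto
  have M_ge: "height C j \<le> M" if "j \<le> length C" for j
    using that by (auto simp: M_def hs)
  obtain k where k: "k \<le> length C" "height C k = M"
  proof -
    have "M \<in> height C ` {..length C}" unfolding M_def hs by (rule Max_in) auto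
    then show thesis using that by auto
  qed
  have kpos: "kpos C = (LEAST k. k \<le> length C \<and> height C k = M)"
    by (simp add: kpos_def M_def)
  have K: "kpos C \<le> length C \<and> height C (kpos C) = M"
    unfolding kpos using k by (rule LeastI[of _ k, OF conjI])
  have "height C j < M" if "j < kpos C" for j
    using not_less_Least[of j "\<lambda>k. k \<le> length C \<and> height C k = M"] that K M_ge[of j]
    unfolding kpos by force
  then show ?thesis using K M_ge by (simp add: leftmost_max_def)
qed

lemma leftmost_max_unique: "leftmost_max C m \<Longrightarrow> leftmost_max C m' \<Longrightarrow> m = m'"
  unfolding leftmost_max_def by (metis linorder_neqE_nat not_le)

lemma kpos_eqI: "leftmost_max C m \<Longrightarrow> kpos C = m"
  using leftmost_max_kpos leftmost_max_unique by blast

lemma points_above_axis_iff: "(\<exists>P \<in> points C. 0 < snd P) \<longleftrightarrow> 0 < height C (kpos C)"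
  using leftmost_max_kpos[of C] unfolding leftmost_max_def points_def
  by (force intro: order.strict_trans2)

definition first_reach :: "path \<Rightarrow> int \<Rightarrow> nat" where
  "first_reach H h = (LEAST j. h \<le> height H j)"

lemma first_reach_eqI:
  assumes "height H m = h" "\<forall>j<m. height H j < h"
  shows "first_reach H h = m"
  unfolding first_reach_def using assms by (intro Least_equality) (auto simp: not_less[symmetric])

lemma first_reach_spec:
  assumes "0 < h" "h \<le> height H k" "k \<le> length H"
  shows "first_reach H h \<le> k" "height H (first_reach H h) = h"
    "\<forall>j<first_reach H h. height H j < h"
proof -
  let ?m = "first_reach H h"
  show "?m \<le> k" unfolding first_reach_def using assms(2) by (rule Least_le)
  show below: "\<forall>j<?m. height H j < h"
    unfolding first_reach_def using not_less_Least not_le by blast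
  have "h \<le> height H ?m" unfolding first_reach_def using assms(2) by (rule LeastI)
  moreover obtain j where j: "?m = Suc j"
    using \<open>h \<le> height H ?m\<close> assms(1) by (cases ?m) auto
  moreover have "j < length H" using \<open>?m \<le> k\<close> assms(3) j by simp
  \<comment> \<open>the path climbs by at most one per step, so it cannot jump over level h\<close>
  ultimately show "height H ?m = h"
    using height_Suc[of j H] below j by (auto simp: step_val_def split: if_splits)
qed

definition excursion_end :: "path \<Rightarrow> nat \<Rightarrow> int \<Rightarrow> nat" where
  "excursion_end H k h = (LEAST p. k \<le> p \<and> (\<forall>i. p \<le> i \<and> i \<le> length H \<longrightarrow> height H i \<le> h))"

lemma excursion_end_eqI:
  assumes "k \<le> p" "p \<le> length H" "\<forall>i. p \<le> i \<and> i \<le> length H \<longrightarrow> height H i \<le> h"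
    "k < p \<Longrightarrow> h < height H (p - 1)"
  shows "excursion_end H k h = p"
  unfolding excursion_end_def
proof (rule Least_equality)
  fix q assume q: "k \<le> q \<and> (\<forall>i. q \<le> i \<and> i \<le> length H \<longrightarrow> height H i \<le> h)"
  show "p \<le> q"
  proof (rule ccontr)
    assume "\<not> p \<le> q"
    then have "q \<le> p - 1" "p - 1 \<le> length H" using assms(2) by auto
    then have "height H (p - 1) \<le> h" using q by blast
    then show False using assms(4) \<open>\<not> p \<le> q\<close> q by linarith
  qed
qed (use assms in auto)

lemma excursion_end_spec:
  assumes "k \<le> length H" "height H k = h" "height H (length H) \<le> h"
  defines "p \<equiv> excursion_end H k h"
  shows "k \<le> p" "p \<le> length H" "\<forall>i. p \<le> i \<and> i \<le> length H \<longrightarrow> height H i \<le> h"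
    "height H p = h" "k < p \<Longrightarrow> \<not> H ! (p - 1)"
proof -
  let ?P = "\<lambda>p. k \<le> p \<and> (\<forall>i. p \<le> i \<and> i \<le> length H \<longrightarrow> height H i \<le> h)"
  have "?P p" unfolding p_def excursion_end_def
    by (rule LeastI[of _ "length H"]) (use assms in auto)
  then show "k \<le> p" "\<forall>i. p \<le> i \<and> i \<le> length H \<longrightarrow> height H i \<le> h" by auto
  show "p \<le> length H" unfolding p_def excursion_end_def
    by (rule Least_le) (use assms in auto)
  have above: "h < height H (p - 1)" if "k < p"
  proof -
    have "k \<le> p - 1" using that by simp
    moreover have "\<not> ?P (p - 1)"
      using not_less_Least[of "p - 1" ?P] that unfolding p_def excursion_end_def by simp
    ultimately obtain i where i: "p - 1 \<le> i" "i \<le> length H" "h < height H i" by auto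
    moreover have "\<not> p \<le> i" using \<open>?P p\<close> i by auto
    ultimately have "i = p - 1" by linarith
    then show ?thesis using i by simp
  qed
  have step: "height H p = height H (p - 1) + step_val (H ! (p - 1))" if "k < p"
    using height_Suc[of "p - 1" H] that \<open>p \<le> length H\<close> by simp
  \<comment> \<open>the last step of the excursion above h must be a down step landing on h\<close>
  show "height H p = h"
    using above step \<open>?P p\<close> \<open>p \<le> length H\<close> assms(2)
    by (cases "k < p") (auto simp: step_val_def split: if_splits)
  show "\<not> H ! (p - 1)" if "k < p"
    using above[OF that] step[OF that] \<open>?P p\<close> \<open>p \<le> length H\<close> by (auto simp: step_val_def)
qed

definition unsplit :: "path \<times> int \<times> int \<Rightarrow> path \<times> path \<times> path" where
  "unsplit = (\<lambda>(H, X).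
     let k = nat (fst X); m = first_reach H (snd X); p = excursion_end H k (snd X)
     in (drop m (take k H), drop k (take p H), take m H @ drop p H))"

lemma s_apply:
  assumes "height A (length A) = 0"
  shows "s (A, B, C) =
    (take (kpos C) C @ A @ B @ drop (kpos C) C, int (kpos C + length A), height C (kpos C))"
proof -
  have m: "length (take (kpos C) C) = kpos C"
    using leftmost_max_kpos[of C] by (simp add: leftmost_max_def)
  have "height (take (kpos C) C @ A @ B @ drop (kpos C) C) (kpos C + length A)
      = height ((take (kpos C) C @ A) @ B @ drop (kpos C) C) (length (take (kpos C) C @ A))"
    using m by simp
  also have "\<dots> = height C (kpos C)"
    using height_append_right[of "take (kpos C) C" A "length A"] assms m
    by (simp only: height_append_left order.refl) (simp add: height_take)
  finally show ?thesis using m by (simp add: s_def Let_def)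
qed

lemma first_reach_append:
  assumes "height P (length P) = h" "\<forall>j<length P. height P j < h"
  shows "first_reach (P @ R) h = length P"
  using assms by (intro first_reach_eqI) (simp_all add: height_append_left)

lemma excursion_end_append:
  assumes "height B (length B) = 0" "B = [] \<or> \<not> last B" "\<forall>j\<le>length Q. height Q j \<le> 0"
  shows "excursion_end (P @ B @ Q) (length P) (height P (length P)) = length P + length B"
proof (rule excursion_end_eqI)
  let ?h = "height P (length P)"
  have right: "height (P @ B @ Q) (length P + length B + j) = ?h + height Q j" for j
    using height_append_right[of P "B @ Q"] height_append_right[of B Q j] assms(1)
    by (simp add: add.assoc)
  show "\<forall>i. length P + length B \<le> i \<and> i \<le> length (P @ B @ Q) \<longrightarrow> height (P @ B @ Q) i \<le> ?h"
  proof (intro allI impI)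
    fix i assume i: "length P + length B \<le> i \<and> i \<le> length (P @ B @ Q)"
    define j where "j = i - (length P + length B)"
    have "i = length P + length B + j" "j \<le> length Q" using i by (auto simp: j_def)
    then show "height (P @ B @ Q) i \<le> ?h" using right[of j] assms(3) by simp
  qed
  show "?h < height (P @ B @ Q) (length P + length B - 1)" if "length P < length P + length B"
  proof -
    have "B \<noteq> []" "\<not> last B" using that assms(2) by auto
    then have "height B (length B - 1) = 1" using height_last_down assms(1) by simp
    moreover have "length P + length B - 1 = length P + (length B - 1)"
      using \<open>B \<noteq> []\<close> by (cases B) auto
    ultimately show ?thesis
      using height_append_right[of P "B @ Q" "length B - 1"] height_append_left[of "length B - 1" B Q]
      by simp
  qed
qed simp_all

lemma unsplit_s:
  assumes "(A, B, C) \<in> U n"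
  shows "unsplit (s (A, B, C)) = (A, B, C)"
proof -
  define m where "m = kpos C"
  define h where "h = height C m"
  have m: "leftmost_max C m" unfolding m_def by (rule leftmost_max_kpos)
  then have C1: "length (take m C) = m" "height (take m C) m = h" "\<forall>j<m. height (take m C) j < h"
    by (auto simp: leftmost_max_def height_take h_def)
  have C2: "\<forall>j\<le>length (drop m C). height (drop m C) j \<le> 0"
  proof (intro allI impI)
    fix j assume "j \<le> length (drop m C)"
    then have "m + j \<le> length C" using m by (auto simp: leftmost_max_def)
    then have "height C (m + j) \<le> h" using m by (auto simp: leftmost_max_def h_def)
    then show "height (drop m C) j \<le> 0" using height_add[of C m j] by (simp add: h_def)
  qed
  have bal: "height A (length A) = 0" "height B (length B) = 0" and lastB: "B = [] \<or> \<not> last B"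
    using assms by (auto simp: U_def T_iff balanced_iff)
  have CA: "length (take m C @ A) = m + length A" "height (take m C @ A) (m + length A) = h"
    using C1 bal(1) height_append_right[of "take m C" A "length A"] by simp_all
  have "unsplit (s (A, B, C)) = unsplit ((take m C @ A) @ B @ drop m C, int (m + length A), h)"
    using s_apply[OF bal(1)] by (simp add: m_def h_def)
  also have "\<dots> = (A, B, C)"
    using first_reach_append[of "take m C" h "A @ B @ drop m C"] C1
      excursion_end_append[OF bal(2) lastB C2, of "take m C @ A"] CA
    by (simp add: unsplit_def Let_def nat_int_add)
  finally show ?thesis .
qed

lemma s_in_Dplus:
  assumes "(A, B, C) \<in> U n"
  shows "s (A, B, C) \<in> Dplus n"
proof -
  define x where "x = length (take (kpos C) C) + length A"
  define H where "H = take (kpos C) C @ A @ B @ drop (kpos C) C"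
  have s: "s (A, B, C) = (H, int x, height H x)" by (simp add: s_def Let_def H_def x_def)
  have bal: "height A (length A) = 0" and "0 < height C (kpos C)"
    using assms by (auto simp: U_def T_iff balanced_iff points_above_axis_iff)
  then have "0 < height H x"
    using arg_cong[OF s_apply[OF bal, of B C], of "\<lambda>y. snd (snd y)"] unfolding s by simp
  moreover have "x \<le> length H" by (simp add: x_def H_def)
  moreover have "ups (take (kpos C) C) + ups (drop (kpos C) C) = ups C"
    "downs (take (kpos C) C) + downs (drop (kpos C) C) = downs C"
    by (simp_all flip: ups_append downs_append)
  then have "ups H = n" "downs H = n" using assms by (auto simp: U_def T_iff H_def)
  ultimately show ?thesis unfolding s by (auto simp: Dplus_def D_def points_def)
qed

lemma height_glue:
  assumes "m \<le> length H"
  shows "j \<le> m \<Longrightarrow> height (take m H @ drop p H) j = height H j"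
    "height (take m H @ drop p H) (m + i) = height H m + height H (p + i) - height H p"
  using assms height_append_left[of j "take m H"] height_append_right[of "take m H" "drop p H" i]
    height_add[of H p i] by (simp_all add: height_take)

lemma leftmost_max_glue:
  assumes "m \<le> p" "p \<le> length H" "\<forall>j<m. height H j < height H m"
    "height H p = height H m" "\<forall>i. p \<le> i \<and> i \<le> length H \<longrightarrow> height H i \<le> height H m"
  shows "leftmost_max (take m H @ drop p H) m"
proof -
  let ?C = "take m H @ drop p H"
  note glue = height_glue[of m H, OF order.trans[OF assms(1,2)]]
  have "height ?C j \<le> height ?C m" if j: "j \<le> length ?C" for j
  proof (cases "j \<le> m")
    case True
    then show ?thesis using glue(1) assms(3) by (cases "j = m") (auto simp: less_imp_le)
  next
    case False
    define i where "i = j - m"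
    have "j = m + i" "p + i \<le> length H" using False j assms(1,2) by (auto simp: i_def)
    then show ?thesis
      using glue(1)[where j=m and p=p] glue(2)[where p=p and i=i] assms(4,5) by simp
  qed
  then show ?thesis using assms glue(1) by (auto simp: leftmost_max_def)
qed

lemma Dplus_unsplit:
  assumes "(H, X) \<in> Dplus n"
  shows "unsplit (H, X) \<in> U n \<and> s (unsplit (H, X)) = (H, X)"
proof -
  obtain k where X: "X = (int k, height H k)" and k: "k \<le> length H"
    and pos: "0 < height H k" and ups: "ups H = n" and downs: "downs H = n"
    using assms by (auto simp: Dplus_def D_def points_def)
  define h where "h = height H k"
  have balH: "height H (length H) = 0" using ups downs by (simp add: height_length)
  define m where "m = first_reach H h"
  define p where "p = excursion_end H k h"
  have M: "m \<le> k" "height H m = h" "\<forall>j<m. height H j < h"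
    unfolding m_def using first_reach_spec[of h H k] pos k by (simp_all add: h_def)
  have P: "k \<le> p" "p \<le> length H" "\<forall>i. p \<le> i \<and> i \<le> length H \<longrightarrow> height H i \<le> h"
    "height H p = h" "k < p \<longrightarrow> \<not> H ! (p - 1)"
    unfolding p_def using excursion_end_spec[of k H h] k balH pos by (simp_all add: h_def)
  define A where "A = drop m (take k H)"
  define B where "B = drop k (take p H)"
  define C where "C = take m H @ drop p H"
  have unsplit_eq: "unsplit (H, X) = (A, B, C)"
    by (simp add: unsplit_def Let_def X A_def B_def C_def m_def p_def h_def)
  have H_split: "H = take m H @ A @ B @ drop p H"
    using M(1) P(1)
    by (simp add: A_def B_def) (metis append.assoc append_take_drop_id take_take min.absorb1)
  have bal: "height A (length A) = 0" "height B (length B) = 0"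
    using height_segment[of m k H] height_segment[of k p H] M P k
    by (simp_all add: A_def B_def h_def)
  have "leftmost_max C m"
    unfolding C_def using M P k balH by (intro leftmost_max_glue) auto
  then have kpos: "kpos C = m" by (rule kpos_eqI)
  have m_le: "m \<le> length H" using M(1) k by simp
  have hC: "height C m = h" "height C (length C) = 0"
    using height_glue(1)[OF m_le, where j=m and p=p] height_glue(2)[OF m_le, where p=p and i="length H - p"]
      M P balH
    by (simp_all add: C_def)
  have "take m C = take m H" "drop m C = drop p H" "length A = k - m"
    using m_le k by (simp_all add: C_def A_def)
  then have "s (A, B, C) = (H, X)"
    using s_apply[OF bal(1), of B C] H_split[symmetric] hC(1) M(1) X by (simp add: kpos h_def)
  moreover have "B = [] \<or> \<not> last B"
    using P(5) P(1,2) by (cases "k < p") (auto simp: B_def last_conv_nth)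
  moreover have "ups H = ups A + ups B + ups C" "downs H = downs A + downs B + downs C"
    using arg_cong[OF H_split, of ups] arg_cong[OF H_split, of downs] by (simp_all add: C_def)
  then have "(A, B, C) \<in> T n"
    using bal hC(2) ups downs by (simp add: T_iff balanced_iff)
  ultimately show ?thesis
    using hC(1) pos by (simp add: unsplit_eq U_def points_above_axis_iff kpos h_def)
qed

theorem lemma2:
  fixes n :: nat
  assumes "n > 0"
  shows "bij_betw s (U n) (Dplus n)"
proof (rule bij_betw_byWitness[where f' = unsplit])
  show "\<forall>a \<in> U n. unsplit (s a) = a" using unsplit_s by auto
  show "\<forall>y \<in> Dplus n. s (unsplit y) = y" using Dplus_unsplit by auto
  show "s ` U n \<subseteq> Dplus n" using s_in_Dplus by auto
  show "unsplit ` Dplus n \<subseteq> U n" using Dplus_unsplit by auto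
qed

end
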